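(* Let $\mathbb{F}$ be a field of characteristic $2$ with algebraic closure $\overline{\mathbb{F}}$, let $V$ be an $n$-dimensional $\mathbb{F}$-vector space and $b$ a non-degenerate symmetric bilinear form on $V$ with quadratic form $Q: x\mapsto b(x,x)$. Let $V_1, V_2$ be linear subspaces of $V$ such that $b_a(v_1,v_2)=0$ for all $v_1\in V_1$, $v_2\in V_2$, and assume $\dim V_1 + \dim V_2 > n$. Then: (1) $n$ is odd and the Witt index of $b$ equals $\frac{n-1}{2}$; (2) both $V_1$ and $V_2$ contain $(\operatorname{Ker} Q)^\perp$; (3) $\dim V_1 + \dim V_2 = n+1$.
   Context: Every $\alpha\in\overline{\mathbb{F}}$ has a unique square root $\sqrt{\alpha}\in\overline{\mathbb{F}}$. The a-transform of $b$ is the map $b_a : V^2 \to \overline{\mathbb{F}}$, $b_a(x,y) := b(x,y) + \sqrt{Q(x)Q(y)}$. $\operatorname{Ker} Q = \{x\in V: Q(x)=0\}$ (a linear subspace in characteristic $2$), and $X^\perp = \{y\in V : b(x,y)=0\ \forall x\in X\}$. The Witt index of $b$ is the greatest dimension of a subspace on which $b$ vanishes identically. *)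

theory Defs
  imports "HOL-Analysis.Analysis" "HOL-Algebra.Algebraic_Closure_Type"
begin

text \<open>V is modelled as the coordinate space 'a^'n (n = CARD('n)) over the field 'a;
  the algebraic closure of 'a is the library type 'a alg_closure with embedding to_ac.\<close>

definition sym_bilinear :: "('a::field ^ 'n \<Rightarrow> 'a ^ 'n \<Rightarrow> 'a) \<Rightarrow> bool" where
  "sym_bilinear b \<longleftrightarrow>
     (\<forall>x y z. b (x + y) z = b x z + b y z) \<and>
     (\<forall>c x z. b (c *s x) z = c * b x z) \<and>
     (\<forall>x y. b x y = b y x)"

definition nondegenerate :: "('a::field ^ 'n \<Rightarrow> 'a ^ 'n \<Rightarrow> 'a) \<Rightarrow> bool" where
  "nondegenerate b \<longleftrightarrow> (\<forall>x. (\<forall>y. b x y = 0) \<longrightarrow> x = 0)"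

definition quad :: "('a::field ^ 'n \<Rightarrow> 'a ^ 'n \<Rightarrow> 'a) \<Rightarrow> 'a ^ 'n \<Rightarrow> 'a" where
  "quad b x = b x x"

text \<open>The unique square root in the algebraic closure (characteristic 2).\<close>
definition ac_sqrt :: "'a::field alg_closure \<Rightarrow> 'a alg_closure" where
  "ac_sqrt \<alpha> = (THE \<beta>. \<beta> ^ 2 = \<alpha>)"

definition a_transform :: "('a::field ^ 'n \<Rightarrow> 'a ^ 'n \<Rightarrow> 'a) \<Rightarrow> 'a ^ 'n \<Rightarrow> 'a ^ 'n \<Rightarrow> 'a alg_closure" where
  "a_transform b x y = to_ac (b x y) + ac_sqrt (to_ac (quad b x * quad b y))"

definition kerQ :: "('a::field ^ 'n \<Rightarrow> 'a ^ 'n \<Rightarrow> 'a) \<Rightarrow> ('a ^ 'n) set" where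
  "kerQ b = {x. quad b x = 0}"

definition orth_compl :: "('a::field ^ 'n \<Rightarrow> 'a ^ 'n \<Rightarrow> 'a) \<Rightarrow> ('a ^ 'n) set \<Rightarrow> ('a ^ 'n) set" where
  "orth_compl b S = {y. \<forall>x\<in>S. b x y = 0}"

definition witt_index :: "('a::field ^ 'n \<Rightarrow> 'a ^ 'n \<Rightarrow> 'a) \<Rightarrow> nat" where
  "witt_index b = Max {vec.dim W | W. vec.subspace W \<and> (\<forall>x\<in>W. \<forall>y\<in>W. b x y = 0)}"

end

theory Submission
  imports Defs
begin

text \<open>In characteristic 2 the map \<open>\<surd>Q\<close> is additive and \<open>\<bbbF>\<close>-semilinear, and
  \<open>b\<^sub>a(x, y) = b(x, y) + \<surd>Q(x) \<surd>Q(y)\<close>. If \<open>\<surd>Q\<close> vanished on \<open>V\<^sub>1\<close>, then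
  \<open>V\<^sub>2 \<subseteq> V\<^sub>1\<^sup>\<bottom>\<close>, contradicting \<open>dim V\<^sub>1 + dim V\<^sub>2 > n\<close>; so some \<open>u \<in> V\<^sub>1\<close> has \<open>Q(u) \<noteq> 0\<close>.
  On the subspace \<open>P\<close> where \<open>\<surd>(Q(x) Q(u)) \<in> \<bbbF>\<close>, which contains \<open>V\<^sub>1\<close> and \<open>V\<^sub>2\<close>, the a-transform
  is an \<open>\<bbbF>\<close>-valued alternating form \<open>A\<close>. Since \<open>V\<^sub>1\<close> and \<open>V\<^sub>2\<close> are \<open>A\<close>-orthogonal,
  \<open>dim V\<^sub>1 + dim V\<^sub>2 \<le> dim P + dim rad A\<close>, and the kernel of \<open>\<surd>(Q Q(u))\<close> on \<open>rad A\<close> lies in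
  \<open>P\<^sup>\<bottom>\<close>, so the sum is at most \<open>n + 1\<close>. Hence it equals \<open>n + 1\<close>, a Lagrangian of \<open>A\<close> has
  dimension \<open>(n + 1) / 2\<close>, and its intersection with the kernel of \<open>\<surd>(Q Q(u))\<close> is a totally
  \<open>b\<close>-isotropic subspace of dimension at least \<open>(n - 1) / 2\<close>. Finally \<open>V\<^sub>2 \<inter> Ker Q\<close> is the kernel of
  \<open>b(u, -)\<close> on \<open>V\<^sub>2\<close>, so \<open>V\<^sub>1 \<subseteq> (V\<^sub>2 \<inter> Ker Q)\<^sup>\<bottom>\<close> is an equality by counting dimensions,
  whence \<open>(Ker Q)\<^sup>\<bottom> \<subseteq> V\<^sub>1\<close>.\<close>

section \<open>Linear functionals and symmetric bilinear forms on a subspace\<close>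

definition linear_functional_on :: "('a::field ^ 'n) set \<Rightarrow> ('a ^ 'n \<Rightarrow> 'a) \<Rightarrow> bool" where
  "linear_functional_on U f \<longleftrightarrow>
     (\<forall>x\<in>U. \<forall>y\<in>U. f (x + y) = f x + f y) \<and> (\<forall>c. \<forall>x\<in>U. f (c *s x) = c * f x)"

lemma linear_functional_on_add:
  "linear_functional_on U f \<Longrightarrow> x \<in> U \<Longrightarrow> y \<in> U \<Longrightarrow> f (x + y) = f x + f y"
  unfolding linear_functional_on_def by blast

lemma linear_functional_on_scale:
  "linear_functional_on U f \<Longrightarrow> x \<in> U \<Longrightarrow> f (c *s x) = c * f x"
  unfolding linear_functional_on_def by blast

lemma linear_functional_on_subset:
  "linear_functional_on U f \<Longrightarrow> W \<subseteq> U \<Longrightarrow> linear_functional_on W f"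
  unfolding linear_functional_on_def by blast

lemma linear_functional_on_0:
  assumes "vec.subspace U" and "linear_functional_on U f"
  shows "f 0 = 0"
  using linear_functional_on_scale[OF assms(2) vec.subspace_0[OF assms(1)], of 0] by simp

lemma subspace_common_kernel_on:
  assumes U: "vec.subspace U" and G: "\<forall>g\<in>G. linear_functional_on U g"
  shows "vec.subspace {x\<in>U. \<forall>g\<in>G. g x = 0}"
proof (rule vec.subspaceI)
  show "0 \<in> {x\<in>U. \<forall>g\<in>G. g x = 0}"
    using U G linear_functional_on_0 vec.subspace_0 by blast
next
  fix x y assume "x \<in> {x\<in>U. \<forall>g\<in>G. g x = 0}" "y \<in> {x\<in>U. \<forall>g\<in>G. g x = 0}"
  then show "x + y \<in> {x\<in>U. \<forall>g\<in>G. g x = 0}"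
    using G linear_functional_on_add vec.subspace_add[OF U] by fastforce
next
  fix c x assume "x \<in> {x\<in>U. \<forall>g\<in>G. g x = 0}"
  then show "c *s x \<in> {x\<in>U. \<forall>g\<in>G. g x = 0}"
    using G linear_functional_on_scale vec.subspace_scale[OF U] by fastforce
qed

lemma dim_le_dim_kernel_on_Suc:
  assumes U: "vec.subspace U" and f: "linear_functional_on U f"
  shows "vec.dim U \<le> vec.dim {x\<in>U. f x = 0} + 1"
proof (cases "\<forall>x\<in>U. f x = 0")
  case True
  then have "{x\<in>U. f x = 0} = U" by auto
  then show ?thesis by simp
next
  case False
  then obtain u where u: "u \<in> U" "f u \<noteq> 0" by auto
  let ?K = "{x\<in>U. f x = 0}"
  have "U \<subseteq> vec.span (insert u ?K)"
  proof
    fix x assume x: "x \<in> U"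
    define k where "k = f x / f u"
    have x': "x - k *s u \<in> U" using U x u(1) by (simp add: vec.subspace_diff vec.subspace_scale)
    have "f x = f (x - k *s u) + k * f u"
      using linear_functional_on_add[OF f x' vec.subspace_scale[OF U u(1), where c=k]]
        linear_functional_on_scale[OF f u(1)] by simp
    then have "f (x - k *s u) = 0" using u(2) by (simp add: k_def)
    then have "x - k *s u \<in> vec.span ?K" using x' by (simp add: vec.span_base)
    then show "x \<in> vec.span (insert u ?K)" unfolding vec.span_insert by blast
  qed
  then have "vec.dim U \<le> vec.dim (insert u ?K)" by (rule vec.dim_mono)
  also have "\<dots> \<le> vec.dim ?K + 1" by (simp add: vec.dim_insert)
  finally show ?thesis .
qed

lemma dim_le_dim_common_kernel_on:
  assumes U: "vec.subspace U" and "finite G" and "\<forall>g\<in>G. linear_functional_on U g"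
  shows "vec.dim U \<le> vec.dim {x\<in>U. \<forall>g\<in>G. g x = 0} + card G"
  using assms(2,3)
proof (induction G rule: finite_induct)
  case empty
  then show ?case by simp
next
  case (insert g G)
  let ?K = "{x\<in>U. \<forall>h\<in>G. h x = 0}"
  have lin: "\<forall>h\<in>G. linear_functional_on U h" "linear_functional_on U g"
    using insert.prems by auto
  have K: "vec.subspace ?K" by (rule subspace_common_kernel_on[OF U lin(1)])
  have "linear_functional_on ?K g" by (rule linear_functional_on_subset[OF lin(2)]) blast
  then have "vec.dim ?K \<le> vec.dim {x\<in>?K. g x = 0} + 1" by (rule dim_le_dim_kernel_on_Suc[OF K])
  moreover have "vec.dim {x\<in>?K. g x = 0} = vec.dim {x\<in>U. \<forall>h\<in>insert g G. h x = 0}"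
    by (rule arg_cong[where f = vec.dim]) auto
  moreover have "vec.dim U \<le> vec.dim ?K + card G" by (rule insert.IH[OF lin(1)])
  moreover have "card (insert g G) = card G + 1" using insert.hyps by simp
  ultimately show ?case by linarith
qed

lemma linear_functional_on_span_eq_0:
  assumes U: "vec.subspace U" and f: "linear_functional_on U f"
    and S: "S \<subseteq> U" "\<forall>s\<in>S. f s = 0" and y: "y \<in> vec.span S"
  shows "f y = 0"
proof -
  have "vec.span S \<subseteq> {x\<in>U. \<forall>g\<in>{f}. g x = 0}"
    using S subspace_common_kernel_on[OF U, of "{f}"] f by (intro vec.span_minimal) auto
  then show ?thesis using y by auto
qed

lemma extend_basis_complement:
  assumes "R \<subseteq> W"
  obtains B where "finite B" "B \<subseteq> W" "card B + vec.dim R = vec.dim W" "W \<subseteq> vec.span (R \<union> B)"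
proof -
  obtain BR where BR: "BR \<subseteq> R" "vec.independent BR" "card BR = vec.dim R"
    by (rule vec.basis_exists[of R])
  obtain B where B: "BR \<subseteq> B" "B \<subseteq> W" "vec.independent B" "W \<subseteq> vec.span B"
    by (rule vec.maximal_independent_subset_extend[OF subset_trans[OF BR(1) assms] BR(2)])
  have fin: "finite B" by (rule vec.finiteI_independent[OF B(3)])
  have "card B = vec.dim W" by (rule vec.basis_card_eq_dim[OF B(2) B(4) B(3)])
  moreover have "card (B - BR) = card B - card BR" by (rule card_Diff_subset[OF finite_subset[OF B(1) fin] B(1)])
  moreover have "card BR \<le> card B" by (rule card_mono[OF fin B(1)])
  ultimately have "card (B - BR) + vec.dim R = vec.dim W" using BR(3) by linarith
  moreover have "vec.span B \<subseteq> vec.span (R \<union> (B - BR))"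
    using BR(1) by (intro vec.span_mono) blast
  ultimately show thesis using that[of "B - BR"] fin B(2,4) by blast
qed

lemma vec_dim_le_card: "vec.dim (S :: ('a::field ^ 'n) set) \<le> CARD('n)"
  using vec.dim_subset[OF subset_UNIV, of S] vec_dim_card by metis

lemma orth_compl_antimono: "S \<subseteq> T \<Longrightarrow> orth_compl A T \<subseteq> orth_compl A S"
  unfolding orth_compl_def by blast

lemma subset_orth_compl_self_iff: "S \<subseteq> orth_compl A S \<longleftrightarrow> (\<forall>x\<in>S. \<forall>y\<in>S. A x y = 0)"
  unfolding orth_compl_def by blast

definition sym_bilinear_on :: "('a::field ^ 'n) set \<Rightarrow> ('a ^ 'n \<Rightarrow> 'a ^ 'n \<Rightarrow> 'a) \<Rightarrow> bool" where
  "sym_bilinear_on U A \<longleftrightarrow>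
     (\<forall>x\<in>U. linear_functional_on U (A x)) \<and> (\<forall>x\<in>U. \<forall>y\<in>U. A x y = A y x)"

lemma sym_bilinear_on_commute: "sym_bilinear_on U A \<Longrightarrow> x \<in> U \<Longrightarrow> y \<in> U \<Longrightarrow> A x y = A y x"
  unfolding sym_bilinear_on_def by blast

lemma sym_bilinear_on_linear_right: "sym_bilinear_on U A \<Longrightarrow> x \<in> U \<Longrightarrow> linear_functional_on U (A x)"
  unfolding sym_bilinear_on_def by blast

lemma sym_bilinear_on_linear_left:
  assumes U: "vec.subspace U" and A: "sym_bilinear_on U A" and y: "y \<in> U"
  shows "linear_functional_on U (\<lambda>x. A x y)"
  unfolding linear_functional_on_def
proof (intro conjI ballI allI)
  note lin = sym_bilinear_on_linear_right[OF A y] and commute = sym_bilinear_on_commute[OF A _ y]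
  fix x z assume "x \<in> U" "z \<in> U"
  then show "A (x + z) y = A x y + A z y"
    using linear_functional_on_add[OF lin] commute vec.subspace_add[OF U] by metis
next
  note lin = sym_bilinear_on_linear_right[OF A y] and commute = sym_bilinear_on_commute[OF A _ y]
  fix c x assume "x \<in> U"
  then show "A (c *s x) y = c * A x y"
    using linear_functional_on_scale[OF lin] commute vec.subspace_scale[OF U] by metis
qed

lemma subspace_inter_orth_compl:
  assumes U: "vec.subspace U" and A: "sym_bilinear_on U A"
    and S: "vec.subspace S" "S \<subseteq> U" and T: "T \<subseteq> U"
  shows "vec.subspace (S \<inter> orth_compl A T)"
proof -
  have "\<forall>g\<in>A ` T. linear_functional_on S g"
    using sym_bilinear_on_linear_right[OF A] T linear_functional_on_subset[OF _ S(2)] by blast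
  then have "vec.subspace {x\<in>S. \<forall>g\<in>A ` T. g x = 0}" by (rule subspace_common_kernel_on[OF S(1)])
  moreover have "{x\<in>S. \<forall>g\<in>A ` T. g x = 0} = S \<inter> orth_compl A T"
    unfolding orth_compl_def by auto
  ultimately show ?thesis by simp
qed

lemma dim_inter_orth_compl_le:
  assumes U: "vec.subspace U" and A: "sym_bilinear_on U A"
    and S: "vec.subspace S" "S \<subseteq> U" and T: "vec.subspace T" "T \<subseteq> U"
  shows "vec.dim T + vec.dim (S \<inter> orth_compl A T) \<le> vec.dim (T \<inter> orth_compl A S) + vec.dim S"
proof -
  let ?R = "S \<inter> orth_compl A T"
  obtain B where B: "finite B" "B \<subseteq> S" "card B + vec.dim ?R = vec.dim S" "S \<subseteq> vec.span (?R \<union> B)"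
    using extend_basis_complement[of ?R S] by blast
  let ?K = "{y\<in>T. \<forall>g\<in>A ` B. g y = 0}"
  have "\<forall>g\<in>A ` B. linear_functional_on T g"
    using sym_bilinear_on_linear_right[OF A] B(2) S(2) linear_functional_on_subset[OF _ T(2)] by blast
  then have "vec.dim T \<le> vec.dim ?K + card (A ` B)"
    using B(1) by (intro dim_le_dim_common_kernel_on[OF T(1)]) simp_all
  moreover have "card (A ` B) \<le> card B" using B(1) by (rule card_image_le)
  moreover have "?K \<subseteq> T \<inter> orth_compl A S"
  proof
    fix y assume y: "y \<in> ?K"
    have lin: "linear_functional_on U (\<lambda>x. A x y)"
      using y T(2) by (intro sym_bilinear_on_linear_left[OF U A]) blast
    have "A s y = 0" if s: "s \<in> ?R \<union> B" for s
    proof -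
      consider "s \<in> B" | "s \<in> S" "A y s = 0"
        using s y unfolding orth_compl_def by blast
      then show ?thesis
      proof cases
        case 1
        then show ?thesis using y by blast
      next
        case 2
        then show ?thesis using sym_bilinear_on_commute[OF A, of s y] y S(2) T(2) by auto
      qed
    qed
    then have "A x y = 0" if "x \<in> S" for x
      using linear_functional_on_span_eq_0[OF U lin, of "?R \<union> B" x] B(2,4) S(2) that by blast
    then show "y \<in> T \<inter> orth_compl A S" using y unfolding orth_compl_def by blast
  qed
  then have "vec.dim ?K \<le> vec.dim (T \<inter> orth_compl A S)" by (rule vec.dim_subset)
  ultimately show ?thesis using B(3) by linarith
qed

lemma dim_inter_orth_compl:
  assumes U: "vec.subspace U" and A: "sym_bilinear_on U A" and W: "vec.subspace W" "W \<subseteq> U"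
  shows "vec.dim (U \<inter> orth_compl A W) + vec.dim W = vec.dim U + vec.dim (W \<inter> orth_compl A U)"
  using dim_inter_orth_compl_le[OF U A W U subset_refl] dim_inter_orth_compl_le[OF U A U subset_refl W]
  by linarith

lemma dim_add_le_of_orthogonal:
  assumes U: "vec.subspace U" and A: "sym_bilinear_on U A"
    and V: "vec.subspace V" "V \<subseteq> U" and W: "W \<subseteq> U" "W \<subseteq> orth_compl A V"
  shows "vec.dim V + vec.dim W \<le> vec.dim U + vec.dim (U \<inter> orth_compl A U)"
proof -
  have "vec.dim W \<le> vec.dim (U \<inter> orth_compl A V)" using W by (intro vec.dim_subset) blast
  moreover have "V \<inter> orth_compl A U \<subseteq> U \<inter> orth_compl A U" using V(2) by blast
  then have "vec.dim (V \<inter> orth_compl A U) \<le> vec.dim (U \<inter> orth_compl A U)" by (rule vec.dim_subset)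
  ultimately show ?thesis using dim_inter_orth_compl_le[OF U A U subset_refl V] by linarith
qed

lemma span_subset_orth_compl_span:
  assumes P: "vec.subspace P" and A: "sym_bilinear_on P A" and T: "T \<subseteq> P" "T \<subseteq> orth_compl A T"
  shows "vec.span T \<subseteq> orth_compl A (vec.span T)"
proof -
  have span: "vec.span T \<subseteq> P" using P T(1) by (simp add: vec.span_minimal)
  have right: "A u v = 0" if u: "u \<in> T" and v: "v \<in> vec.span T" for u v
  proof (rule linear_functional_on_span_eq_0[OF P _ T(1) _ v])
    show "linear_functional_on P (A u)" using u T(1) by (intro sym_bilinear_on_linear_right[OF A]) blast
    show "\<forall>s\<in>T. A u s = 0" using u T(2) unfolding orth_compl_def by blast
  qed
  have "A u v = 0" if u: "u \<in> vec.span T" and v: "v \<in> vec.span T" for u v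
  proof -
    have "linear_functional_on P (\<lambda>x. A x v)"
      using v span by (intro sym_bilinear_on_linear_left[OF P A]) blast
    then show ?thesis using linear_functional_on_span_eq_0[OF P _ T(1) _ u] right[OF _ v] by blast
  qed
  then show ?thesis unfolding orth_compl_def by blast
qed

lemma isotropic_span_insert:
  assumes P: "vec.subspace P" and A: "sym_bilinear_on P A" and alt: "\<forall>x\<in>P. A x x = 0"
    and L: "L \<subseteq> P" "L \<subseteq> orth_compl A L" and x: "x \<in> P \<inter> orth_compl A L"
  shows "vec.span (insert x L) \<subseteq> orth_compl A (vec.span (insert x L))"
proof (rule span_subset_orth_compl_span[OF P A])
  show "insert x L \<subseteq> P" using x L(1) by blast
  have "A l x = 0" if "l \<in> L" for l
    using x that by (simp add: orth_compl_def)
  moreover have "A x l = A l x" if "l \<in> L" for l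
    using sym_bilinear_on_commute[OF A] x L(1) that by blast
  ultimately show "insert x L \<subseteq> orth_compl A (insert x L)"
    using x alt L(2) unfolding subset_orth_compl_self_iff by auto
qed

lemma alternating_exists_lagrangian:
  fixes A :: "'a::field ^ 'n \<Rightarrow> 'a ^ 'n \<Rightarrow> 'a"
  assumes P: "vec.subspace P" and A: "sym_bilinear_on P A" and alt: "\<forall>x\<in>P. A x x = 0"
  obtains L where "vec.subspace L" "L \<subseteq> P" "L \<subseteq> orth_compl A L"
    "2 * vec.dim L = vec.dim P + vec.dim (P \<inter> orth_compl A P)"
proof -
  let ?iso = "\<lambda>L. vec.subspace L \<and> L \<subseteq> P \<and> L \<subseteq> orth_compl A L"
  have "?iso {0}"
    using vec.subspace_0[OF P] alt by (simp add: orth_compl_def)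
  moreover have "\<forall>L. ?iso L \<longrightarrow> vec.dim L < Suc CARD('n)"
    using vec_dim_le_card le_imp_less_Suc by blast
  ultimately have "\<exists>L. ?iso L \<and> (\<forall>L'. ?iso L' \<longrightarrow> vec.dim L' \<le> vec.dim L)"
    by (rule ex_has_greatest_nat)
  then obtain L where "?iso L" and max: "\<forall>L'. ?iso L' \<longrightarrow> vec.dim L' \<le> vec.dim L"
    by blast
  then have L: "vec.subspace L" "L \<subseteq> P" "L \<subseteq> orth_compl A L" by auto
  have "P \<inter> orth_compl A L \<subseteq> L"
  proof
    fix x assume x: "x \<in> P \<inter> orth_compl A L"
    show "x \<in> L"
    proof (rule ccontr)
      assume "x \<notin> L"
      moreover have "vec.span L = L" using L(1) by (rule vec.span_eq_iff[THEN iffD2])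
      ultimately have x_span: "x \<notin> vec.span L" by metis
      have "vec.span (insert x L) \<subseteq> P" using x L(2) by (intro vec.span_minimal[OF _ P]) blast
      then have "?iso (vec.span (insert x L))"
        using isotropic_span_insert[OF P A alt L(2,3) x] by simp
      then have "vec.dim (insert x L) \<le> vec.dim L" using max vec.dim_span by metis
      with x_span show False by (simp add: vec.dim_insert)
    qed
  qed
  then have self: "P \<inter> orth_compl A L = L" using L by blast
  have "P \<inter> orth_compl A P \<subseteq> L"
    using self orth_compl_antimono[OF L(2), of A] by blast
  then have rad: "L \<inter> orth_compl A P = P \<inter> orth_compl A P" using L(2) by blast
  have "2 * vec.dim L = vec.dim P + vec.dim (P \<inter> orth_compl A P)"
    using dim_inter_orth_compl[OF P A L(1,2)] unfolding self rad by simp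
  then show thesis using that L by blast
qed

section \<open>Nondegenerate forms and the Witt index\<close>

lemma sym_bilinear_commute: "sym_bilinear b \<Longrightarrow> b x y = b y x"
  unfolding sym_bilinear_def by blast

lemma sym_bilinear_add_left: "sym_bilinear b \<Longrightarrow> b (x + y) z = b x z + b y z"
  unfolding sym_bilinear_def by blast

lemma sym_bilinear_add_right: "sym_bilinear b \<Longrightarrow> b z (x + y) = b z x + b z y"
  by (metis sym_bilinear_add_left sym_bilinear_commute)

lemma sym_bilinear_scale_left: "sym_bilinear b \<Longrightarrow> b (c *s x) z = c * b x z"
  unfolding sym_bilinear_def by blast

lemma sym_bilinear_scale_right: "sym_bilinear b \<Longrightarrow> b z (c *s x) = c * b z x"
  by (metis sym_bilinear_scale_left sym_bilinear_commute)

lemma sym_bilinear_imp_on: "sym_bilinear b \<Longrightarrow> sym_bilinear_on U b"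
  unfolding sym_bilinear_on_def linear_functional_on_def
  by (auto simp: sym_bilinear_add_right sym_bilinear_scale_right intro: sym_bilinear_commute)

lemma dim_orth_compl_le:
  fixes b :: "'a::field ^ 'n \<Rightarrow> 'a ^ 'n \<Rightarrow> 'a"
  assumes b: "sym_bilinear b" "nondegenerate b" and W: "vec.subspace W"
  shows "vec.dim (orth_compl b W) + vec.dim W \<le> CARD('n)"
proof -
  have "W \<inter> orth_compl b UNIV \<subseteq> {0}"
  proof
    fix x assume "x \<in> W \<inter> orth_compl b UNIV"
    then have "\<forall>y. b x y = 0" using sym_bilinear_commute[OF b(1)] unfolding orth_compl_def by auto
    then show "x \<in> {0}" using b(2) unfolding nondegenerate_def by blast
  qed
  then have "vec.dim (W \<inter> orth_compl b UNIV) = 0"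
    using vec.dim_subset[of _ "{0}"] by fastforce
  moreover have "vec.dim (UNIV :: ('a ^ 'n) set) = CARD('n)" by (rule vec_dim_card)
  ultimately show ?thesis
    using dim_inter_orth_compl_le[OF vec.subspace_UNIV sym_bilinear_imp_on[OF b(1)]
        vec.subspace_UNIV subset_UNIV W subset_UNIV]
    unfolding Int_UNIV_left by linarith
qed

lemma subspace_orth_compl: "sym_bilinear b \<Longrightarrow> vec.subspace (orth_compl b W)"
  using subspace_inter_orth_compl[OF vec.subspace_UNIV sym_bilinear_imp_on vec.subspace_UNIV
      subset_UNIV subset_UNIV] by simp

lemma dim_isotropic_le:
  fixes b :: "'a::field ^ 'n \<Rightarrow> 'a ^ 'n \<Rightarrow> 'a"
  assumes "sym_bilinear b" "nondegenerate b" and "vec.subspace W" "W \<subseteq> orth_compl b W"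
  shows "2 * vec.dim W \<le> CARD('n)"
  using dim_orth_compl_le[OF assms(1-3)] vec.dim_subset[OF assms(4)] by linarith

lemma witt_index_eqI:
  fixes b :: "'a::field ^ 'n \<Rightarrow> 'a ^ 'n \<Rightarrow> 'a"
  assumes b: "sym_bilinear b" "nondegenerate b"
    and W: "vec.subspace W" "W \<subseteq> orth_compl b W" "CARD('n) \<le> 2 * vec.dim W + 1"
  shows "witt_index b = CARD('n) div 2"
proof -
  let ?D = "{vec.dim V |V. vec.subspace V \<and> (\<forall>x\<in>V. \<forall>y\<in>V. b x y = 0)}"
  have bounded: "d \<le> CARD('n) div 2" if "d \<in> ?D" for d
  proof -
    obtain V where "d = vec.dim V" "vec.subspace V" "V \<subseteq> orth_compl b V"
      using \<open>d \<in> ?D\<close> unfolding subset_orth_compl_self_iff by blast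
    then have "2 * d \<le> CARD('n)" using dim_isotropic_le[OF b] by blast
    then show ?thesis by presburger
  qed
  have "?D \<subseteq> {..CARD('n) div 2}" using bounded unfolding subset_eq atMost_iff by blast
  then have "finite ?D" by (rule finite_subset) simp
  moreover have "vec.dim W = CARD('n) div 2" using dim_isotropic_le[OF b W(1,2)] W(3) by linarith
  then have "CARD('n) div 2 \<in> ?D"
    using W(1,2) unfolding subset_orth_compl_self_iff by (intro CollectI exI[of _ W]) simp
  ultimately show ?thesis unfolding witt_index_def using bounded by (intro Max_eqI) blast+
qed

section \<open>Square roots in characteristic 2\<close>

lemma CHAR_2_two_eq_0: "CHAR('b::semiring_1) = 2 \<Longrightarrow> (2::'b) = 0"
  using of_nat_CHAR[where 'a='b] by simp

lemma CHAR_2_add_self: "CHAR('b::semiring_1) = 2 \<Longrightarrow> x + x = (0::'b)"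
  using CHAR_2_two_eq_0[where 'b='b] mult_2[of x] by simp

lemma CHAR_2_minus_eq: "CHAR('b::ring_1) = 2 \<Longrightarrow> - x = (x::'b)"
  by (rule minus_unique) (rule CHAR_2_add_self)

lemma CHAR_2_power2_add: "CHAR('b::comm_semiring_1) = 2 \<Longrightarrow> (x + y) ^ 2 = x ^ 2 + (y::'b) ^ 2"
  using CHAR_2_two_eq_0[where 'b='b] by (simp add: power2_sum)

lemma CHAR_2_power2_inj:
  assumes "CHAR('b::idom) = 2" and "x ^ 2 = y ^ 2" shows "x = (y::'b)"
proof -
  have "(x + y) ^ 2 = 0" using assms by (simp add: CHAR_2_power2_add CHAR_2_add_self)
  then have "x = - y" by (simp add: eq_neg_iff_add_eq_0)
  then show ?thesis using CHAR_2_minus_eq[OF assms(1)] by simp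
qed

lemma ac_sqrt_eqI:
  assumes "CHAR('a::field) = 2" and "y ^ 2 = z"
  shows "ac_sqrt z = (y::'a alg_closure)"
  unfolding ac_sqrt_def
proof (rule the_equality)
  have char: "CHAR('a alg_closure) = 2" using assms(1) by simp
  show "w = y" if "w ^ 2 = z" for w
    by (rule CHAR_2_power2_inj[OF char]) (simp add: that assms(2))
qed (fact assms(2))

lemma ac_sqrt_power2: "CHAR('a::field) = 2 \<Longrightarrow> ac_sqrt z ^ 2 = (z::'a alg_closure)"
  using nth_root_exists[of 2 z] ac_sqrt_eqI by force

lemma quad_scale: "sym_bilinear b \<Longrightarrow> quad b (c *s x) = c ^ 2 * quad b x"
  unfolding quad_def by (simp add: sym_bilinear_scale_left sym_bilinear_scale_right power2_eq_square)

lemma quad_add: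
  assumes "CHAR('a::field) = 2" and "sym_bilinear (b :: 'a ^ 'n \<Rightarrow> _)"
  shows "quad b (x + y) = quad b x + quad b y"
proof -
  have "quad b (x + y) = quad b x + quad b y + (b x y + b x y)"
    unfolding quad_def using assms(2)
    by (simp add: sym_bilinear_add_left sym_bilinear_add_right sym_bilinear_commute[of b y x])
  then show ?thesis using CHAR_2_add_self[OF assms(1)] by simp
qed

definition quad_sqrt :: "('a::field ^ 'n \<Rightarrow> 'a ^ 'n \<Rightarrow> 'a) \<Rightarrow> 'a ^ 'n \<Rightarrow> 'a alg_closure" where
  "quad_sqrt b x = ac_sqrt (to_ac (quad b x))"

locale char2_sym_bilinear =
  fixes b :: "'a::field ^ 'n \<Rightarrow> 'a ^ 'n \<Rightarrow> 'a"
  assumes char2: "CHAR('a) = 2" and bilinear: "sym_bilinear b"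
begin

lemma quad_sqrt_power2: "quad_sqrt b x ^ 2 = to_ac (quad b x)"
  unfolding quad_sqrt_def using char2 by (rule ac_sqrt_power2)

lemma quad_sqrt_eq_0_iff: "quad_sqrt b x = 0 \<longleftrightarrow> quad b x = 0"
  by (metis quad_sqrt_power2 power_zero_numeral to_ac_eq_0_iff power_eq_0_iff)

lemma quad_sqrt_add: "quad_sqrt b (x + y) = quad_sqrt b x + quad_sqrt b y"
  unfolding quad_sqrt_def[of b "x + y"] using char2
  by (rule ac_sqrt_eqI)
     (simp add: CHAR_2_power2_add char2 quad_sqrt_power2 quad_add[OF char2 bilinear])

lemma quad_sqrt_scale: "quad_sqrt b (c *s x) = to_ac c * quad_sqrt b x"
  unfolding quad_sqrt_def[of b "c *s x"] using char2
  by (rule ac_sqrt_eqI) (simp add: power_mult_distrib quad_sqrt_power2 quad_scale[OF bilinear])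

lemma quad_sqrt_0: "quad_sqrt b 0 = 0"
  using quad_sqrt_scale[of 0 0] by simp

lemma a_transform_eq: "a_transform b x y = to_ac (b x y) + quad_sqrt b x * quad_sqrt b y"
proof -
  have "ac_sqrt (to_ac (quad b x * quad b y)) = quad_sqrt b x * quad_sqrt b y"
    using char2 by (rule ac_sqrt_eqI) (simp add: power_mult_distrib quad_sqrt_power2)
  then show ?thesis unfolding a_transform_def by simp
qed

lemma a_transform_eq_0_iff:
  "a_transform b x y = 0 \<longleftrightarrow> to_ac (b x y) = quad_sqrt b x * quad_sqrt b y"
proof -
  have minus: "- (quad_sqrt b x * quad_sqrt b y) = quad_sqrt b x * quad_sqrt b y"
    by (rule CHAR_2_minus_eq) (simp add: char2)
  have "a_transform b x y = 0 \<longleftrightarrow> to_ac (b x y) = - (quad_sqrt b x * quad_sqrt b y)"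
    unfolding a_transform_eq by (rule eq_neg_iff_add_eq_0[symmetric])
  then show ?thesis by (simp only: minus)
qed

lemma a_transform_commute: "a_transform b x y = a_transform b y x"
  by (simp add: a_transform_eq sym_bilinear_commute[OF bilinear] mult.commute)

end

section \<open>Descent of the a-transform to the base field\<close>

locale anisotropic_vector = char2_sym_bilinear +
  fixes u :: "'a::field ^ 'n"
  assumes anisotropic: "quad b u \<noteq> 0"
begin

text \<open>On the subspace where \<open>\<surd>(Q x Q u)\<close> lies in \<open>\<bbbF>\<close>, the a-transform is \<open>\<bbbF>\<close>-valued,
  because \<open>\<surd>(Q x) \<surd>(Q y) = \<surd>(Q x Q u) \<surd>(Q y Q u) / Q u\<close>.\<close>

definition rational_locus :: "('a ^ 'n) set" where
  "rational_locus = {x. quad_sqrt b x * quad_sqrt b u \<in> range to_ac}"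

definition rational_root :: "'a ^ 'n \<Rightarrow> 'a" where
  "rational_root x = of_ac (quad_sqrt b x * quad_sqrt b u)"

definition rational_a_transform :: "'a ^ 'n \<Rightarrow> 'a ^ 'n \<Rightarrow> 'a" where
  "rational_a_transform x y = b x y + rational_root x * rational_root y / quad b u"

lemma quad_sqrt_anisotropic: "quad_sqrt b u \<noteq> 0"
  using anisotropic by (simp add: quad_sqrt_eq_0_iff)

lemma rational_locusI: "quad_sqrt b x * quad_sqrt b u = to_ac c \<Longrightarrow> x \<in> rational_locus"
  unfolding rational_locus_def by auto

lemma to_ac_rational_root:
  "x \<in> rational_locus \<Longrightarrow> to_ac (rational_root x) = quad_sqrt b x * quad_sqrt b u"
  unfolding rational_locus_def rational_root_def by (simp add: to_ac_of_ac)

lemma subspace_rational_locus: "vec.subspace rational_locus"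
proof (rule vec.subspaceI)
  show "0 \<in> rational_locus"
    by (rule rational_locusI[of _ 0]) (simp add: quad_sqrt_0)
next
  fix x y assume "x \<in> rational_locus" "y \<in> rational_locus"
  then show "x + y \<in> rational_locus"
    by (intro rational_locusI[of _ "rational_root x + rational_root y"])
       (simp add: quad_sqrt_add distrib_right to_ac_rational_root)
next
  fix c x assume "x \<in> rational_locus"
  then show "c *s x \<in> rational_locus"
    by (intro rational_locusI[of _ "c * rational_root x"])
       (simp add: quad_sqrt_scale to_ac_rational_root mult.assoc)
qed

lemma linear_functional_on_rational_root: "linear_functional_on rational_locus rational_root"
  unfolding linear_functional_on_def
proof (intro conjI ballI allI)
  fix x y assume xy: "x \<in> rational_locus" "y \<in> rational_locus"
  then have "x + y \<in> rational_locus" by (rule vec.subspace_add[OF subspace_rational_locus])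
  then have "to_ac (rational_root (x + y)) = to_ac (rational_root x + rational_root y)"
    using xy by (simp add: to_ac_rational_root quad_sqrt_add distrib_right)
  then show "rational_root (x + y) = rational_root x + rational_root y" by (simp only: to_ac_eq_iff)
next
  fix c x assume x: "x \<in> rational_locus"
  then have "c *s x \<in> rational_locus" by (rule vec.subspace_scale[OF subspace_rational_locus])
  then have "to_ac (rational_root (c *s x)) = to_ac (c * rational_root x)"
    using x by (simp add: to_ac_rational_root quad_sqrt_scale mult.assoc)
  then show "rational_root (c *s x) = c * rational_root x" by (simp only: to_ac_eq_iff)
qed

lemma to_ac_rational_a_transform:
  assumes "x \<in> rational_locus" "y \<in> rational_locus"
  shows "to_ac (rational_a_transform x y) = a_transform b x y"
proof -
  have "to_ac (rational_root x * rational_root y / quad b u) = quad_sqrt b x * quad_sqrt b y"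
    using assms quad_sqrt_anisotropic
    by (simp add: to_ac_rational_root power2_eq_square flip: quad_sqrt_power2)
  then show ?thesis unfolding rational_a_transform_def a_transform_eq by simp
qed

lemma rational_a_transform_self:
  assumes "x \<in> rational_locus" shows "rational_a_transform x x = 0"
proof -
  have "(2::'a alg_closure) = 0" by (rule CHAR_2_two_eq_0) (simp add: char2)
  then show ?thesis
    using to_ac_rational_a_transform[OF assms assms] quad_sqrt_power2[of x]
    by (simp add: a_transform_eq quad_def power2_eq_square)
qed

lemma sym_bilinear_on_rational_a_transform:
  "sym_bilinear_on rational_locus rational_a_transform"
  unfolding sym_bilinear_on_def linear_functional_on_def
proof (intro conjI ballI allI)
  note f = linear_functional_on_rational_root
  fix x y z assume "x \<in> rational_locus" "y \<in> rational_locus" "z \<in> rational_locus"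
  then show "rational_a_transform x (y + z) = rational_a_transform x y + rational_a_transform x z"
    unfolding rational_a_transform_def
    by (simp add: linear_functional_on_add[OF f] sym_bilinear_add_right[OF bilinear]
        distrib_left add_divide_distrib)
next
  note f = linear_functional_on_rational_root
  fix c x y assume "x \<in> rational_locus" "y \<in> rational_locus"
  then show "rational_a_transform x (c *s y) = c * rational_a_transform x y"
    unfolding rational_a_transform_def
    by (simp add: linear_functional_on_scale[OF f] sym_bilinear_scale_right[OF bilinear]
        algebra_simps)
next
  fix x y
  show "rational_a_transform x y = rational_a_transform y x"
    unfolding rational_a_transform_def by (simp add: sym_bilinear_commute[OF bilinear] mult.commute)
qed

lemma dim_rational_locus_radical_le:
  assumes "nondegenerate b"
  shows "vec.dim rational_locus + vec.dim (rational_locus \<inter> orth_compl rational_a_transform rational_locus)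
    \<le> CARD('n) + 1"
proof -
  let ?P = rational_locus and ?A = rational_a_transform
  let ?R = "?P \<inter> orth_compl ?A ?P"
  have R: "vec.subspace ?R"
    using subspace_inter_orth_compl[OF subspace_rational_locus sym_bilinear_on_rational_a_transform
        subspace_rational_locus] by blast
  have "vec.dim ?R \<le> vec.dim {x\<in>?R. rational_root x = 0} + 1"
    using linear_functional_on_subset[OF linear_functional_on_rational_root]
    by (intro dim_le_dim_kernel_on_Suc[OF R]) blast
  moreover have "{x\<in>?R. rational_root x = 0} \<subseteq> orth_compl b ?P"
    unfolding orth_compl_def rational_a_transform_def by auto
  then have "vec.dim {x\<in>?R. rational_root x = 0} \<le> vec.dim (orth_compl b ?P)"
    by (rule vec.dim_subset)
  moreover have "vec.dim (orth_compl b ?P) + vec.dim ?P \<le> CARD('n)"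
    by (rule dim_orth_compl_le[OF bilinear assms subspace_rational_locus])
  ultimately show ?thesis by linarith
qed

lemma isotropic_rational_root_kernel:
  assumes L: "vec.subspace L" "L \<subseteq> rational_locus" "L \<subseteq> orth_compl rational_a_transform L"
  obtains W where "vec.subspace W" "W \<subseteq> orth_compl b W" "vec.dim L \<le> vec.dim W + 1"
proof
  let ?W = "{x\<in>L. rational_root x = 0}"
  have f: "linear_functional_on L rational_root"
    using linear_functional_on_subset[OF linear_functional_on_rational_root L(2)] .
  show "vec.subspace ?W" using subspace_common_kernel_on[OF L(1), of "{rational_root}"] f by simp
  show "?W \<subseteq> orth_compl b ?W"
    using L(3) unfolding orth_compl_def rational_a_transform_def by auto
  show "vec.dim L \<le> vec.dim ?W + 1" by (rule dim_le_dim_kernel_on_Suc[OF L(1) f])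
qed

end

locale a_orthogonal_pair = char2_sym_bilinear +
  fixes V1 V2 :: "('a::field ^ 'n) set"
  assumes nondegenerate: "nondegenerate b"
    and subspace1: "vec.subspace V1" and subspace2: "vec.subspace V2"
    and a_orthogonal: "\<forall>v1\<in>V1. \<forall>v2\<in>V2. a_transform b v1 v2 = 0"
    and dim_sum_gt: "CARD('n) < vec.dim V1 + vec.dim V2"
begin

lemma swap: "a_orthogonal_pair b V2 V1"
proof unfold_locales
  show "\<forall>v1\<in>V2. \<forall>v2\<in>V1. a_transform b v1 v2 = 0"
    using a_orthogonal a_transform_commute by metis
  show "CARD('n) < vec.dim V2 + vec.dim V1" using dim_sum_gt by linarith
qed (fact char2 bilinear nondegenerate subspace1 subspace2)+

lemma to_ac_eq_quad_sqrt_mult: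
  "v1 \<in> V1 \<Longrightarrow> v2 \<in> V2 \<Longrightarrow> to_ac (b v1 v2) = quad_sqrt b v1 * quad_sqrt b v2"
  using a_orthogonal a_transform_eq_0_iff by blast

lemma exists_anisotropic: "\<exists>u\<in>V1. quad b u \<noteq> 0"
proof (rule ccontr)
  assume "\<not> (\<exists>u\<in>V1. quad b u \<noteq> 0)"
  then have "quad_sqrt b v1 = 0" if "v1 \<in> V1" for v1
    using that quad_sqrt_eq_0_iff by blast
  then have "b v1 v2 = 0" if "v1 \<in> V1" "v2 \<in> V2" for v1 v2
    using to_ac_eq_quad_sqrt_mult[OF that] that(1) by simp
  then have "V2 \<subseteq> orth_compl b V1" unfolding orth_compl_def by blast
  then have "vec.dim V2 \<le> vec.dim (orth_compl b V1)" by (rule vec.dim_subset)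
  then show False
    using dim_orth_compl_le[OF bilinear nondegenerate subspace1] dim_sum_gt by linarith
qed

lemma orth_compl_kerQ_subset: "orth_compl b (kerQ b) \<subseteq> V1"
proof -
  obtain u where u: "u \<in> V1" "quad b u \<noteq> 0" using exists_anisotropic by blast
  let ?W = "{v\<in>V2. b u v = 0}"
  have W_kerQ: "?W \<subseteq> kerQ b"
  proof
    fix v assume "v \<in> ?W"
    then have "quad_sqrt b u * quad_sqrt b v = 0" using to_ac_eq_quad_sqrt_mult[OF u(1), of v] by simp
    then show "v \<in> kerQ b" using u(2) by (simp add: kerQ_def quad_sqrt_eq_0_iff)
  qed
  have lin: "linear_functional_on V2 (b u)"
    using sym_bilinear_on_linear_right[OF sym_bilinear_imp_on[OF bilinear] UNIV_I]
    by (rule linear_functional_on_subset) simp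
  have W: "vec.subspace ?W" using subspace_common_kernel_on[OF subspace2, of "{b u}"] lin by simp
  have "b w v = 0" if "v \<in> V1" "w \<in> ?W" for v w
  proof -
    have "quad_sqrt b w = 0" using W_kerQ that(2) by (auto simp: kerQ_def quad_sqrt_eq_0_iff)
    then have "b v w = 0" using to_ac_eq_quad_sqrt_mult[OF that(1), of w] that(2) by simp
    then show ?thesis using sym_bilinear_commute[OF bilinear] by metis
  qed
  then have "V1 \<subseteq> orth_compl b ?W" unfolding orth_compl_def by blast
  moreover have "vec.dim (orth_compl b ?W) \<le> vec.dim V1"
    using dim_orth_compl_le[OF bilinear nondegenerate W] dim_le_dim_kernel_on_Suc[OF subspace2 lin]
      dim_sum_gt by linarith
  ultimately have "V1 = orth_compl b ?W"
    by (rule vec.subspace_dim_equal[OF subspace1 subspace_orth_compl[OF bilinear]])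
  then show ?thesis using orth_compl_antimono[OF W_kerQ] by blast
qed

lemma subset_rational_locus:
  assumes u: "u \<in> V1" "quad b u \<noteq> 0"
  shows "V1 \<union> V2 \<subseteq> anisotropic_vector.rational_locus b u"
proof -
  interpret anisotropic_vector b u using u(2) by unfold_locales
  obtain w where w: "w \<in> V2" "quad b w \<noteq> 0"
    using a_orthogonal_pair.exists_anisotropic[OF swap] by blast
  have "quad_sqrt b w \<noteq> 0" using w(2) by (simp add: quad_sqrt_eq_0_iff)
  have "v \<in> rational_locus" if "v \<in> V1" for v
  proof (rule rational_locusI)
    show "quad_sqrt b v * quad_sqrt b u = to_ac (b v w * b u w / quad b w)"
      using \<open>quad_sqrt b w \<noteq> 0\<close> to_ac_eq_quad_sqrt_mult[OF that w(1)] to_ac_eq_quad_sqrt_mult[OF u(1) w(1)]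
      by (simp add: power2_eq_square flip: quad_sqrt_power2)
  qed
  moreover have "v \<in> rational_locus" if "v \<in> V2" for v
    by (rule rational_locusI[of v "b u v"]) (simp add: to_ac_eq_quad_sqrt_mult[OF u(1) that] mult.commute)
  ultimately show ?thesis by blast
qed

lemma dim_sum_eq_and_witt_index:
  "vec.dim V1 + vec.dim V2 = CARD('n) + 1 \<and> odd CARD('n) \<and> witt_index b = CARD('n) div 2"
proof -
  obtain u where u: "u \<in> V1" "quad b u \<noteq> 0" using exists_anisotropic by blast
  interpret anisotropic_vector b u using u(2) by unfold_locales
  note P = subspace_rational_locus and A = sym_bilinear_on_rational_a_transform
  have V: "V1 \<subseteq> rational_locus" "V2 \<subseteq> rational_locus" using subset_rational_locus[OF u] by auto
  have "V2 \<subseteq> orth_compl rational_a_transform V1"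
    using V a_orthogonal to_ac_rational_a_transform unfolding orth_compl_def by fastforce
  then have "vec.dim V1 + vec.dim V2 \<le> vec.dim rational_locus
      + vec.dim (rational_locus \<inter> orth_compl rational_a_transform rational_locus)"
    using dim_add_le_of_orthogonal[OF P A subspace1 V(1) V(2)] by blast
  with dim_rational_locus_radical_le[OF nondegenerate] dim_sum_gt
  have sum: "vec.dim V1 + vec.dim V2 = CARD('n) + 1"
    and PR: "vec.dim rational_locus + vec.dim (rational_locus \<inter> orth_compl rational_a_transform rational_locus)
      = CARD('n) + 1"
    by linarith+
  obtain L where L: "vec.subspace L" "L \<subseteq> rational_locus" "L \<subseteq> orth_compl rational_a_transform L"
    and dim_L: "2 * vec.dim L = CARD('n) + 1"
    using alternating_exists_lagrangian[OF P A] rational_a_transform_self PR by metis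
  obtain W where "vec.subspace W" "W \<subseteq> orth_compl b W" "vec.dim L \<le> vec.dim W + 1"
    using isotropic_rational_root_kernel[OF L] by blast
  then have "witt_index b = CARD('n) div 2"
    using dim_L by (intro witt_index_eqI[OF bilinear nondegenerate]) auto
  with sum dim_L show ?thesis by presburger
qed

end

theorem lemma4p7:
  fixes b :: "'a::field ^ 'n \<Rightarrow> 'a ^ 'n \<Rightarrow> 'a"
    and V1 V2 :: "('a ^ 'n) set"
  assumes "CHAR('a) = 2"
    and "sym_bilinear b"
    and "nondegenerate b"
    and "vec.subspace V1" and "vec.subspace V2"
    and "\<forall>v1\<in>V1. \<forall>v2\<in>V2. a_transform b v1 v2 = 0"
    and "vec.dim V1 + vec.dim V2 > CARD('n)"
  shows "odd (CARD('n)) \<and> witt_index b = (CARD('n) - 1) div 2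
    \<and> orth_compl b (kerQ b) \<subseteq> V1 \<and> orth_compl b (kerQ b) \<subseteq> V2
    \<and> vec.dim V1 + vec.dim V2 = CARD('n) + 1"
proof -
  interpret a_orthogonal_pair b V1 V2
    using assms by unfold_locales
  interpret swapped: a_orthogonal_pair b V2 V1
    by (rule swap)
  have "odd CARD('n)" "witt_index b = CARD('n) div 2" "vec.dim V1 + vec.dim V2 = CARD('n) + 1"
    using dim_sum_eq_and_witt_index by auto
  moreover have "(CARD('n) - 1) div 2 = CARD('n) div 2" using \<open>odd CARD('n)\<close> by (auto elim: oddE)
  ultimately show ?thesis
    using orth_compl_kerQ_subset swapped.orth_compl_kerQ_subset by simp
qed

end
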